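(* Let $a+ib\in\overline{\mathcal Z_{1+}}$ (with $a,b\in E_{d+1}$). Then for every $M\in\mathcal C_1$ and every $\tau\in\mathbb C$ with $\mathrm{Im}\,\tau>0$, the point $\exp(\tau M)(a+ib)$ belongs to $\mathcal Z_{1+}$.
   Context: Let $d\ge2$. $E_{d+1}=\mathbb R^{d+1}$, $E^{(c)}_{d+1}=\mathbb C^{d+1}$ with bilinear form $(x,y)=x^0y^0+x^dy^d-\sum_{j=1}^{d-1}x^jy^j$. $X_d=\{x\in E_{d+1}:(x,x)=1\}$, $X_d^{(c)}=\{z\in E^{(c)}_{d+1}:(z,z)=1\}$. $\exp$ is the matrix exponential; $\ell(a\wedge b)x=a(b,x)-b(a,x)$. $\mathcal C_1=\{\ell(a\wedge b):(a,a)=(b,b)=1,(a,b)=0,a^0b^d-a^db^0>0\}$. $\mathcal Z_{1+}=\{\exp(\tau M)c: M\in\mathcal C_1,\ c\in X_d,\ \mathrm{Im}\,\tau>0\}\subset X_d^{(c)}$, and $\overline{\mathcal Z_{1+}}$ denotes its closure. *)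

theory Defs
  imports "HOL-Analysis.Analysis"
begin

text \<open>Coordinates of E_{d+1} are indexed by a finite type 'n with CARD('n) = d+1;
  the two distinguished indices p and q play the roles of the coordinates 0 and d.\<close>

definition lform :: "'n::finite \<Rightarrow> 'n \<Rightarrow> 'a::comm_ring ^ 'n \<Rightarrow> 'a ^ 'n \<Rightarrow> 'a" where
  "lform p q x y = x$p * y$p + x$q * y$q - (\<Sum>j\<in>UNIV - {p, q}. x$j * y$j)"

definition cvec :: "real ^ 'n \<Rightarrow> complex ^ 'n" where
  "cvec x = (\<chi> i. complex_of_real (x$i))"

definition Xd :: "'n::finite \<Rightarrow> 'n \<Rightarrow> (real ^ 'n) set" where
  "Xd p q = {x. lform p q x x = 1}"

definition ell :: "'n::finite \<Rightarrow> 'n \<Rightarrow> complex ^ 'n \<Rightarrow> complex ^ 'n \<Rightarrow> complex ^ 'n ^ 'n" where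
  "ell p q a b = matrix (\<lambda>x. lform p q b x *s a - lform p q a x *s b)"

definition matpow :: "complex ^ 'n ^ 'n \<Rightarrow> nat \<Rightarrow> complex ^ 'n ^ 'n" where
  "matpow A k = ((\<lambda>B. A ** B) ^^ k) (mat 1)"

definition matexp :: "complex ^ 'n ^ 'n \<Rightarrow> complex ^ 'n ^ 'n" where
  "matexp A = (\<Sum>k. (1 / fact k :: real) *\<^sub>R matpow A k)"

definition C1 :: "'n::finite \<Rightarrow> 'n \<Rightarrow> (complex ^ 'n ^ 'n) set" where
  "C1 p q = {ell p q (cvec a) (cvec b) | a b.
      lform p q a a = 1 \<and> lform p q b b = 1 \<and> lform p q a b = 0 \<and>
      a$p * b$q - a$q * b$p > 0}"

definition Z1plus :: "'n::finite \<Rightarrow> 'n \<Rightarrow> (complex ^ 'n) set" where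
  "Z1plus p q = {matexp (map_matrix (\<lambda>m. \<tau> * m) M) *v cvec c | M c \<tau>.
      M \<in> C1 p q \<and> c \<in> Xd p q \<and> Im \<tau> > 0}"

end

theory Submission
  imports Defs
begin

(* Write a point of the complexified space as x + iy. Then Z1plus is the set where
   (x,x) - (y,y) = 1, (x,y) = 0, (y,y) > 0 and the positive plane spanned by x, y is
   negatively oriented with respect to the (p,q)-coordinate plane.  Two positively oriented
   positive definite planes always have positive mixed Gram determinant (normalise both over
   the (p,q)-plane; what remains is a Cauchy-Schwarz estimate for two strict contractions),
   so for a fixed frame (a,b) the orientation condition is equivalent to
   (a,x)(b,y) - (a,y)(b,x) < 0.  Relaxing the strict inequalities gives a closed set that
   contains the closure of Z1plus.  Since M = ell(a,b) satisfies M^3 = -M, exp(tau M) is an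
   explicit complex rotation in the plane of a and b, and for Im tau > 0 it turns the relaxed
   inequalities back into strict ones. *)

section \<open>The indefinite form and positive planes\<close>

lemma lform_add_left: "lform p q (x + y) z = lform p q x z + lform p q y z"
  by (simp add: lform_def algebra_simps sum.distrib)

lemma lform_add_right: "lform p q z (x + y) = lform p q z x + lform p q z y"
  by (simp add: lform_def algebra_simps sum.distrib)

lemma lform_diff_left: "lform p q (x - y) z = lform p q x z - lform p q y z"
  by (simp add: lform_def algebra_simps sum_subtractf)

lemma lform_diff_right: "lform p q z (x - y) = lform p q z x - lform p q z y"
  by (simp add: lform_def algebra_simps sum_subtractf)

lemma lform_minus_left: "lform p q (- x) y = - lform p q x y"
  by (simp add: lform_def sum_negf)

lemma lform_minus_right: "lform p q y (- x) = - lform p q y x"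
  by (simp add: lform_def sum_negf)

lemma lform_smult_left: "lform p q (c *s x) y = c * lform p q x y"
  by (simp add: lform_def algebra_simps sum_distrib_left)

lemma lform_smult_right: "lform p q y (c *s x) = c * lform p q y x"
  by (simp add: lform_def algebra_simps sum_distrib_left)

lemma lform_scaleR_left: "lform p q (c *\<^sub>R x) y = c * lform p q x (y :: real ^ 'n)"
  using lform_smult_left[of p q c x y] by (simp add: scalar_mult_eq_scaleR)

lemma lform_scaleR_right: "lform p q y (c *\<^sub>R x) = c * lform p q y (x :: real ^ 'n)"
  using lform_smult_right[of p q y c x] by (simp add: scalar_mult_eq_scaleR)

lemma lform_zero_right [simp]: "lform p q x 0 = 0"
  by (simp add: lform_def)

lemma lform_commute: "lform p q x y = lform p q y x"
  by (simp add: lform_def mult.commute)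

lemmas lform_real_linear = lform_add_left lform_add_right lform_diff_left lform_diff_right
  lform_minus_left lform_minus_right lform_scaleR_left lform_scaleR_right

lemma lform_cvec [simp]: "lform p q (cvec x) (cvec y) = complex_of_real (lform p q x y)"
  by (simp add: lform_def cvec_def)

definition negative_part :: "'n::finite \<Rightarrow> 'n \<Rightarrow> real ^ 'n \<Rightarrow> real ^ 'n" where
  "negative_part p q x = (\<chi> j. if j = p \<or> j = q then 0 else x $ j)"

lemma negative_part_add: "negative_part p q (x + y) = negative_part p q x + negative_part p q y"
  by (simp add: negative_part_def vec_eq_iff)

lemma negative_part_scaleR: "negative_part p q (c *\<^sub>R x) = c *\<^sub>R negative_part p q x"
  by (simp add: negative_part_def vec_eq_iff)

lemma lform_eq_inner_negative_part:
  "lform p q x y = x$p * y$p + x$q * y$q - inner (negative_part p q x) (negative_part p q y)"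
proof -
  have "inner (negative_part p q x) (negative_part p q y) = (\<Sum>j\<in>UNIV. if j = p \<or> j = q then 0 else x$j * y$j)"
    by (simp add: inner_vec_def negative_part_def if_distrib cong: if_cong)
  also have "\<dots> = (\<Sum>j\<in>UNIV - {p, q}. x$j * y$j)"
    by (rule sum.mono_neutral_cong_right) auto
  finally show ?thesis
    by (simp add: lform_def)
qed

lemma lform_nonpos_if_pq_zero: "(x :: real ^ 'n::finite)$p = 0 \<Longrightarrow> x$q = 0 \<Longrightarrow> lform p q x x \<le> 0"
  by (simp add: lform_eq_inner_negative_part)

definition positive_pair :: "'n::finite \<Rightarrow> 'n \<Rightarrow> real ^ 'n \<Rightarrow> real ^ 'n \<Rightarrow> bool" where
  "positive_pair p q x y \<longleftrightarrow>
     (\<forall>c d. c \<noteq> 0 \<or> d \<noteq> 0 \<longrightarrow> lform p q (c *\<^sub>R x + d *\<^sub>R y) (c *\<^sub>R x + d *\<^sub>R y) > 0)"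

definition orientation :: "'n::finite \<Rightarrow> 'n \<Rightarrow> real ^ 'n \<Rightarrow> real ^ 'n \<Rightarrow> real" where
  "orientation p q x y = x$p * y$q - x$q * y$p"

definition gram_det :: "'n::finite \<Rightarrow> 'n \<Rightarrow> real ^ 'n \<Rightarrow> real ^ 'n \<Rightarrow> real ^ 'n \<Rightarrow> real ^ 'n \<Rightarrow> real" where
  "gram_det p q a b x y = lform p q a x * lform p q b y - lform p q a y * lform p q b x"

lemma gram_det_commute: "gram_det p q a b x y = gram_det p q x y a b"
  by (simp add: gram_det_def lform_commute)

lemma positive_pairI:
  assumes "lform p q x y = 0" "lform p q x x > 0" "lform p q y y > 0"
  shows "positive_pair p q x y"
  unfolding positive_pair_def
proof (intro allI impI)
  fix c d :: real
  assume "c \<noteq> 0 \<or> d \<noteq> 0"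
  then have "c\<^sup>2 * lform p q x x + d\<^sup>2 * lform p q y y > 0"
    using assms(2,3) by (auto intro: add_pos_nonneg add_nonneg_pos)
  moreover have "lform p q (c *\<^sub>R x + d *\<^sub>R y) (c *\<^sub>R x + d *\<^sub>R y) = c\<^sup>2 * lform p q x x + d\<^sup>2 * lform p q y y"
    using assms(1) lform_commute[of p q y x] by (simp add: lform_real_linear power2_eq_square algebra_simps)
  ultimately show "lform p q (c *\<^sub>R x + d *\<^sub>R y) (c *\<^sub>R x + d *\<^sub>R y) > 0"
    by simp
qed

lemma positive_pair_lincomb:
  assumes "positive_pair p q x y" "\<alpha> * \<delta> - \<beta> * \<gamma> \<noteq> 0"
  shows "positive_pair p q (\<alpha> *\<^sub>R x + \<beta> *\<^sub>R y) (\<gamma> *\<^sub>R x + \<delta> *\<^sub>R y)"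
  unfolding positive_pair_def
proof (intro allI impI)
  fix c d :: real
  assume "c \<noteq> 0 \<or> d \<noteq> 0"
  moreover have "c * (\<alpha> * \<delta> - \<beta> * \<gamma>) = \<delta> * (c * \<alpha> + d * \<gamma>) - \<gamma> * (c * \<beta> + d * \<delta>)"
    "d * (\<alpha> * \<delta> - \<beta> * \<gamma>) = \<alpha> * (c * \<beta> + d * \<delta>) - \<beta> * (c * \<alpha> + d * \<gamma>)"
    by (simp_all add: algebra_simps)
  ultimately have "c * \<alpha> + d * \<gamma> \<noteq> 0 \<or> c * \<beta> + d * \<delta> \<noteq> 0"
    using assms(2) by auto
  with assms(1) have "lform p q ((c * \<alpha> + d * \<gamma>) *\<^sub>R x + (c * \<beta> + d * \<delta>) *\<^sub>R y)
      ((c * \<alpha> + d * \<gamma>) *\<^sub>R x + (c * \<beta> + d * \<delta>) *\<^sub>R y) > 0"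
    by (simp add: positive_pair_def)
  then show "lform p q (c *\<^sub>R (\<alpha> *\<^sub>R x + \<beta> *\<^sub>R y) + d *\<^sub>R (\<gamma> *\<^sub>R x + \<delta> *\<^sub>R y))
      (c *\<^sub>R (\<alpha> *\<^sub>R x + \<beta> *\<^sub>R y) + d *\<^sub>R (\<gamma> *\<^sub>R x + \<delta> *\<^sub>R y)) > 0"
    by (simp add: algebra_simps)
qed

lemma gram_det_lincomb:
  "gram_det p q (\<alpha> *\<^sub>R a + \<beta> *\<^sub>R b) (\<gamma> *\<^sub>R a + \<delta> *\<^sub>R b) x y = (\<alpha> * \<delta> - \<beta> * \<gamma>) * gram_det p q a b x y"
  by (simp add: gram_det_def lform_real_linear algebra_simps)

section \<open>Orientation of positive planes\<close>

lemma det2_pos_if_symmetric_part_pos_def: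
  fixes m11 m12 m21 m22 :: real
  assumes pd: "\<And>c d. c \<noteq> 0 \<or> d \<noteq> 0 \<Longrightarrow> c\<^sup>2 * m11 + c * d * (m12 + m21) + d\<^sup>2 * m22 > 0"
  shows "m11 * m22 - m12 * m21 > 0"
proof -
  define h where "h = (m12 + m21) / 2"
  have "m11 > 0"
    using pd[of 1 0] by simp
  have "h\<^sup>2 * m11 + h * (- m11) * (m12 + m21) + m11\<^sup>2 * m22 > 0"
    using pd[of h "- m11"] \<open>m11 > 0\<close> by simp
  moreover have "m12 + m21 = 2 * h"
    by (simp add: h_def)
  ultimately have "m11 * (m11 * m22 - h\<^sup>2) > 0"
    by (simp add: power2_eq_square algebra_simps)
  with \<open>m11 > 0\<close> have "m11 * m22 - h\<^sup>2 > 0"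
    by (simp add: zero_less_mult_iff)
  moreover have "m11 * m22 - m12 * m21 = (m11 * m22 - h\<^sup>2) + ((m12 - m21) / 2)\<^sup>2"
    by (simp add: h_def power2_eq_square field_simps)
  ultimately show ?thesis
    by (smt (verit) zero_le_power2)
qed

lemma det_one_minus_inner_pos:
  fixes k1 k2 l1 l2 :: "'v::real_inner"
  assumes K: "\<And>c d. c \<noteq> 0 \<or> d \<noteq> 0 \<Longrightarrow> (norm (c *\<^sub>R k1 + d *\<^sub>R k2))\<^sup>2 < c\<^sup>2 + d\<^sup>2"
    and L: "\<And>c d. c \<noteq> 0 \<or> d \<noteq> 0 \<Longrightarrow> (norm (c *\<^sub>R l1 + d *\<^sub>R l2))\<^sup>2 < c\<^sup>2 + d\<^sup>2"
  shows "(1 - inner k1 l1) * (1 - inner k2 l2) - (- inner k1 l2) * (- inner k2 l1) > 0"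
proof (rule det2_pos_if_symmetric_part_pos_def)
  fix c d :: real
  assume cd: "c \<noteq> 0 \<or> d \<noteq> 0"
  have "inner (c *\<^sub>R k1 + d *\<^sub>R k2) (c *\<^sub>R l1 + d *\<^sub>R l2)
      \<le> norm (c *\<^sub>R k1 + d *\<^sub>R k2) * norm (c *\<^sub>R l1 + d *\<^sub>R l2)"
    by (rule norm_cauchy_schwarz)
  also have "\<dots> < sqrt (c\<^sup>2 + d\<^sup>2) * sqrt (c\<^sup>2 + d\<^sup>2)"
    using K[OF cd] L[OF cd] by (intro mult_strict_mono') (auto simp: real_less_rsqrt)
  also have "\<dots> = c\<^sup>2 + d\<^sup>2"
    by simp
  finally show "c\<^sup>2 * (1 - inner k1 l1) + c * d * (- inner k1 l2 + - inner k2 l1) + d\<^sup>2 * (1 - inner k2 l2) > 0"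
    by (simp add: inner_add_left inner_add_right power2_eq_square algebra_simps)
qed

definition standard_pair :: "'n::finite \<Rightarrow> 'n \<Rightarrow> real ^ 'n \<Rightarrow> real ^ 'n \<Rightarrow> bool" where
  "standard_pair p q x y \<longleftrightarrow> x$p = 1 \<and> x$q = 0 \<and> y$p = 0 \<and> y$q = 1"

lemma positive_standard_pair_norm_less:
  assumes "positive_pair p q x y" "standard_pair p q x y" "c \<noteq> 0 \<or> d \<noteq> 0"
  shows "(norm (c *\<^sub>R negative_part p q x + d *\<^sub>R negative_part p q y))\<^sup>2 < c\<^sup>2 + d\<^sup>2"
proof -
  have "lform p q (c *\<^sub>R x + d *\<^sub>R y) (c *\<^sub>R x + d *\<^sub>R y) > 0"
    using assms(1,3) by (simp add: positive_pair_def)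
  then show ?thesis
    using assms(2) unfolding lform_eq_inner_negative_part power2_norm_eq_inner
    by (simp add: standard_pair_def negative_part_add negative_part_scaleR power2_norm_eq_inner power2_eq_square)
qed

lemma gram_det_pos_standard:
  assumes "positive_pair p q a b" "standard_pair p q a b"
    and "positive_pair p q x y" "standard_pair p q x y"
  shows "gram_det p q a b x y > 0"
  using det_one_minus_inner_pos[OF positive_standard_pair_norm_less[OF assms(1,2)]
      positive_standard_pair_norm_less[OF assms(3,4)]] assms(2,4)
  by (simp add: gram_det_def lform_eq_inner_negative_part standard_pair_def)

lemma orientation_nonzero:
  assumes "positive_pair p q x y"
  shows "orientation p q x y \<noteq> 0"
proof
  assume singular: "orientation p q x y = 0"
  obtain c d where cd: "c \<noteq> 0 \<or> d \<noteq> 0" "c * x$p + d * y$p = 0" "c * x$q + d * y$q = 0"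
  proof (cases "x$p = 0 \<and> y$p = 0")
    case True
    show thesis
    proof (cases "x$q = 0 \<and> y$q = 0")
      case True
      with \<open>x$p = 0 \<and> y$p = 0\<close> show thesis by (intro that[of 1 0]) auto
    next
      case False
      with True singular show thesis
        by (intro that[of "y$q" "- x$q"]) (auto simp: orientation_def algebra_simps)
    qed
  next
    case False
    with singular show thesis
      by (intro that[of "y$p" "- x$p"]) (auto simp: orientation_def algebra_simps)
  qed
  then have "lform p q (c *\<^sub>R x + d *\<^sub>R y) (c *\<^sub>R x + d *\<^sub>R y) \<le> 0"
    by (intro lform_nonpos_if_pq_zero) simp_all
  moreover have "lform p q (c *\<^sub>R x + d *\<^sub>R y) (c *\<^sub>R x + d *\<^sub>R y) > 0"
    using assms cd(1) unfolding positive_pair_def by blast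
  ultimately show False
    by simp
qed

lemma positive_pair_standardize:
  assumes "positive_pair p q a b"
  obtains a' b' where "positive_pair p q a' b'" "standard_pair p q a' b'"
    "\<And>x y. gram_det p q a b x y = orientation p q a b * gram_det p q a' b' x y"
proof
  define D where "D = orientation p q a b"
  have "D \<noteq> 0"
    using orientation_nonzero[OF assms] by (simp add: D_def)
  have D_eq: "a$p * b$q - a$q * b$p = D"
    by (simp add: D_def orientation_def)
  define a' where "a' = (b$q / D) *\<^sub>R a + (- a$q / D) *\<^sub>R b"
  define b' where "b' = (- b$p / D) *\<^sub>R a + (a$p / D) *\<^sub>R b"
  have "b$q / D * (a$p / D) - (- a$q / D) * (- b$p / D) = (a$p * b$q - a$q * b$p) / (D * D)"
    by (simp add: diff_divide_distrib mult.commute)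
  then have det: "b$q / D * (a$p / D) - (- a$q / D) * (- b$p / D) = 1 / D"
    using \<open>D \<noteq> 0\<close> by (simp add: D_eq)
  show "positive_pair p q a' b'"
    unfolding a'_def b'_def using \<open>D \<noteq> 0\<close> det by (intro positive_pair_lincomb assms) simp
  show "standard_pair p q a' b'"
    using \<open>D \<noteq> 0\<close> D_eq by (simp add: standard_pair_def a'_def b'_def field_simps mult.commute)
  show "gram_det p q a b x y = orientation p q a b * gram_det p q a' b' x y" for x y
    unfolding a'_def b'_def gram_det_lincomb det using \<open>D \<noteq> 0\<close> by (simp add: D_def)
qed

lemma gram_det_pos:
  assumes "positive_pair p q a b" "orientation p q a b > 0"
    and "positive_pair p q x y" "orientation p q x y > 0"
  shows "gram_det p q a b x y > 0"
proof -
  obtain a' b' where ab: "positive_pair p q a' b'" "standard_pair p q a' b'"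
    and ab_eq: "\<And>x y. gram_det p q a b x y = orientation p q a b * gram_det p q a' b' x y"
    using positive_pair_standardize[OF assms(1)] by blast
  obtain x' y' where xy: "positive_pair p q x' y'" "standard_pair p q x' y'"
    and xy_eq: "\<And>a b. gram_det p q x y a b = orientation p q x y * gram_det p q x' y' a b"
    using positive_pair_standardize[OF assms(3)] by blast
  have "gram_det p q a b x y = orientation p q a b * orientation p q x y * gram_det p q a' b' x' y'"
    by (simp add: ab_eq gram_det_commute[of p q a' b'] xy_eq)
  then show ?thesis
    using assms(2,4) gram_det_pos_standard[OF ab xy] by simp
qed

lemma gram_det_neg_iff_orientation_neg:
  assumes "positive_pair p q a b" "orientation p q a b > 0" "positive_pair p q x y"
  shows "gram_det p q a b x y < 0 \<longleftrightarrow> orientation p q x y < 0"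
proof -
  have "positive_pair p q (1 *\<^sub>R x + 0 *\<^sub>R y) (0 *\<^sub>R x + (- 1) *\<^sub>R y)"
    by (rule positive_pair_lincomb[OF assms(3)]) simp
  then have "positive_pair p q x (- y)"
    by simp
  then have "orientation p q x y < 0 \<Longrightarrow> gram_det p q a b x (- y) > 0"
    using assms(1,2) by (intro gram_det_pos) (simp_all add: orientation_def)
  moreover have "orientation p q x y > 0 \<Longrightarrow> gram_det p q a b x y > 0"
    using assms by (intro gram_det_pos)
  ultimately show ?thesis
    using orientation_nonzero[OF assms(3)] by (force simp: gram_det_def lform_minus_right)
qed

definition oriented_frame :: "'n::finite \<Rightarrow> 'n \<Rightarrow> real ^ 'n \<Rightarrow> real ^ 'n \<Rightarrow> bool" where
  "oriented_frame p q a b \<longleftrightarrow>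
     lform p q a a = 1 \<and> lform p q b b = 1 \<and> lform p q a b = 0 \<and> orientation p q a b > 0"

lemma C1_eq: "C1 p q = {ell p q (cvec a) (cvec b) | a b. oriented_frame p q a b}"
  by (simp add: C1_def oriented_frame_def orientation_def)

lemma oriented_frame_positive_pair: "oriented_frame p q a b \<Longrightarrow> positive_pair p q a b"
  by (simp add: oriented_frame_def positive_pairI)

lemma oriented_frame_orthogonal_nonpos:
  assumes frame: "oriented_frame p q a b"
    and "lform p q a w = 0" "lform p q b w = 0"
  shows "lform p q w w \<le> 0"
proof -
  define D where "D = orientation p q a b"
  have "D \<noteq> 0"
    using frame by (simp add: oriented_frame_def D_def)
  \<comment> \<open>Cramer's rule: \<open>\<kappa> a + \<mu> b\<close> agrees with \<open>w\<close> in the coordinates \<open>p\<close> and \<open>q\<close>\<close>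
  define \<kappa> where "\<kappa> = (w$p * b$q - w$q * b$p) / D"
  define \<mu> where "\<mu> = (a$p * w$q - a$q * w$p) / D"
  define u where "u = w - \<kappa> *\<^sub>R a - \<mu> *\<^sub>R b"
  have "u$p = 0" "u$q = 0"
    using \<open>D \<noteq> 0\<close> by (simp_all add: u_def \<kappa>_def \<mu>_def field_simps)
      (simp_all add: D_def orientation_def algebra_simps)
  then have "lform p q u u \<le> 0"
    by (rule lform_nonpos_if_pq_zero)
  moreover have "lform p q u u = lform p q w w + \<kappa>\<^sup>2 + \<mu>\<^sup>2"
    using frame assms(2,3) unfolding u_def oriented_frame_def
    by (simp add: lform_real_linear lform_commute[of p q w a] lform_commute[of p q w b] lform_commute[of p q b a] power2_eq_square)
  ultimately show ?thesis
    by (smt (verit) zero_le_power2)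
qed

lemma oriented_frame_lform_sum_squares_pos:
  assumes "oriented_frame p q a b" "lform p q x x > 0"
  shows "(lform p q a x)\<^sup>2 + (lform p q b x)\<^sup>2 > 0"
  using oriented_frame_orthogonal_nonpos[OF assms(1), of x] assms(2)
  by (smt (verit) power2_less_eq_zero_iff zero_le_power2)

section \<open>Exponentials of rotation generators\<close>

lemma matpow_Suc: "matpow A (Suc k) = A ** matpow A k"
  by (simp add: matpow_def)

lemma map_matrix_mult_mult_vec: "map_matrix (\<lambda>m. c * m) A *v w = c *s (A *v (w :: 'a::comm_ring_1 ^ 'n::finite))"
  by (simp add: vec_eq_iff matrix_vector_mult_def sum_distrib_left mult.assoc)

lemma bounded_linear_map_matrix_mult: "bounded_linear (\<lambda>c::complex. map_matrix (\<lambda>m. c * m) (A :: complex ^ 'n ^ 'm))"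
  unfolding linear_conv_bounded_linear[symmetric]
  by (rule linearI) (simp_all add: vec_eq_iff ring_distribs)

lemma matpow_mult_vec_if_cube_eq_neg:
  fixes M :: "complex ^ 'n::finite ^ 'n"
  assumes cube: "\<And>w. M *v (M *v (M *v w)) = - (M *v w)"
  shows "matpow (map_matrix (\<lambda>m. \<tau> * m) M) k *v w =
    (if k = 0 then w + M *v (M *v w) else 0)
    + (\<tau>^k * of_real (sin_coeff k * fact k)) *s (M *v w)
    - (\<tau>^k * of_real (cos_coeff k * fact k)) *s (M *v (M *v w))"
proof (induction k)
  case 0
  then show ?case
    by (simp add: matpow_def)
next
  case (Suc k)
  have sin_Suc: "sin_coeff (Suc k) * fact (Suc k) = cos_coeff k * fact k"
    by (simp add: sin_coeff_Suc fact_Suc del: of_nat_Suc)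
  have cos_Suc: "cos_coeff (Suc k) * fact (Suc k) = - (sin_coeff k * fact k)"
    by (simp add: cos_coeff_Suc fact_Suc del: of_nat_Suc)
  have "matpow (map_matrix (\<lambda>m. \<tau> * m) M) (Suc k) *v w
      = \<tau> *s (M *v (matpow (map_matrix (\<lambda>m. \<tau> * m) M) k *v w))"
    by (simp add: matpow_Suc map_matrix_mult_mult_vec flip: matrix_vector_mul_assoc)
  also have "\<dots> = (\<tau>^Suc k * of_real (sin_coeff (Suc k) * fact (Suc k))) *s (M *v w)
      - (\<tau>^Suc k * of_real (cos_coeff (Suc k) * fact (Suc k))) *s (M *v (M *v w))"
    unfolding Suc sin_Suc cos_Suc
    by (cases "k = 0") (simp_all add: matrix_vector_right_distrib matrix_vector_mult_diff_distrib
        vector_scalar_commute cube vec_eq_iff algebra_simps)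
  finally show ?case
    by simp
qed

lemma scaleR_complex_vec: "(c :: real) *\<^sub>R (v :: complex ^ 'n) = of_real c *s v"
  unfolding vec_eq_iff vector_scaleR_component vector_smult_component by (simp add: scaleR_conv_of_real)

lemma scaleR_matrix_mult_vec: "((c :: real) *\<^sub>R A) *v (w :: complex ^ 'n::finite) = c *\<^sub>R (A *v w)"
  by (simp add: vec_eq_iff matrix_vector_mult_def scaleR_sum_right)

lemma matexp_mult_vec_if_cube_eq_neg:
  fixes M :: "complex ^ 'n::finite ^ 'n"
  assumes cube: "\<And>w. M *v (M *v (M *v w)) = - (M *v w)"
  shows "matexp (map_matrix (\<lambda>m. \<tau> * m) M) *v w =
    w + sin \<tau> *s (M *v w) + (1 - cos \<tau>) *s (M *v (M *v w))"
proof -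
  define M2 where "M2 = M ** M"
  have series_term: "(1 / fact k) *\<^sub>R matpow (map_matrix (\<lambda>m. \<tau> * m) M) k =
      (if k = 0 then mat 1 + M2 else 0)
      + map_matrix (\<lambda>m. (sin_coeff k *\<^sub>R \<tau>^k) * m) M
      - map_matrix (\<lambda>m. (cos_coeff k *\<^sub>R \<tau>^k) * m) M2" for k
  proof (rule matrix_eq[THEN iffD2], intro allI)
    fix w :: "complex ^ 'n"
    have "fact k \<noteq> (0 :: real)"
      by simp
    have "((1 / fact k) *\<^sub>R matpow (map_matrix (\<lambda>m. \<tau> * m) M) k) *v w
        = of_real (1 / fact k) *s (matpow (map_matrix (\<lambda>m. \<tau> * m) M) k *v w)"
      by (simp only: scaleR_matrix_mult_vec scaleR_complex_vec)
    also have "\<dots> = (if k = 0 then w + M2 *v w else 0)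
        + (sin_coeff k *\<^sub>R \<tau>^k) *s (M *v w) - (cos_coeff k *\<^sub>R \<tau>^k) *s (M2 *v w)"
      unfolding matpow_mult_vec_if_cube_eq_neg[OF cube] M2_def matrix_vector_mul_assoc
      using \<open>fact k \<noteq> 0\<close>
      by (cases "k = 0") (simp_all add: vec_eq_iff scaleR_conv_of_real field_simps)
    also have "\<dots> = ((if k = 0 then mat 1 + M2 else 0)
        + map_matrix (\<lambda>m. (sin_coeff k *\<^sub>R \<tau>^k) * m) M
        - map_matrix (\<lambda>m. (cos_coeff k *\<^sub>R \<tau>^k) * m) M2) *v w"
      unfolding matrix_vector_mult_add_rdistrib matrix_vector_mult_diff_rdistrib map_matrix_mult_mult_vec
      by (cases "k = 0") (simp_all add: matrix_vector_mult_add_rdistrib)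
    finally show "((1 / fact k) *\<^sub>R matpow (map_matrix (\<lambda>m. \<tau> * m) M) k) *v w =
      ((if k = 0 then mat 1 + M2 else 0)
      + map_matrix (\<lambda>m. (sin_coeff k *\<^sub>R \<tau>^k) * m) M
      - map_matrix (\<lambda>m. (cos_coeff k *\<^sub>R \<tau>^k) * m) M2) *v w" .
  qed
  have "(\<lambda>k. (if k = 0 then mat 1 + M2 else 0)
      + map_matrix (\<lambda>m. (sin_coeff k *\<^sub>R \<tau>^k) * m) M
      - map_matrix (\<lambda>m. (cos_coeff k *\<^sub>R \<tau>^k) * m) M2)
    sums (mat 1 + M2 + map_matrix (\<lambda>m. sin \<tau> * m) M - map_matrix (\<lambda>m. cos \<tau> * m) M2)"
    using sums_single[of 0 "\<lambda>_. mat 1 + M2"]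
    by (intro sums_add sums_diff bounded_linear.sums[OF bounded_linear_map_matrix_mult]
        sin_converges cos_converges) simp_all
  then have "matexp (map_matrix (\<lambda>m. \<tau> * m) M) =
      mat 1 + M2 + map_matrix (\<lambda>m. sin \<tau> * m) M - map_matrix (\<lambda>m. cos \<tau> * m) M2"
    unfolding matexp_def series_term[symmetric] by (rule sums_unique[symmetric])
  then show ?thesis
    by (simp add: M2_def matrix_vector_mult_add_rdistrib matrix_vector_mult_diff_rdistrib
        map_matrix_mult_mult_vec flip: matrix_vector_mul_assoc)
qed

lemma ell_mult_vec: "ell p q a b *v w = lform p q b w *s a - lform p q a w *s b"
proof -
  have "Vector_Spaces.linear (*s) (*s) (\<lambda>w. lform p q b w *s a - lform p q a w *s b)"
    by (simp add: Vector_Spaces.linear_iff vec.vector_space_axioms lform_add_right lform_smult_right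
        vec_eq_iff ring_distribs mult.assoc)
  then show ?thesis
    by (simp add: ell_def matrix_works)
qed

context
  fixes p q :: "'n::finite" and a b :: "complex ^ 'n"
  assumes aa: "lform p q a a = 1" and bb: "lform p q b b = 1" and ab: "lform p q a b = 0"
begin

lemma ell_square_mult_vec: "ell p q a b *v (ell p q a b *v w) = - (lform p q a w *s a + lform p q b w *s b)"
  by (simp add: ell_mult_vec lform_diff_right lform_smult_right aa bb ab lform_commute[of p q b a]
      vec_eq_iff algebra_simps)

lemma ell_cube_mult_vec: "ell p q a b *v (ell p q a b *v (ell p q a b *v w)) = - (ell p q a b *v w)"
  by (simp add: ell_square_mult_vec ell_mult_vec lform_add_right lform_diff_right lform_minus_right lform_smult_right aa bb ab
      lform_commute[of p q b a] vec_eq_iff algebra_simps)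

lemma matexp_ell_mult_vec:
  "matexp (map_matrix (\<lambda>m. \<tau> * m) (ell p q a b)) *v w =
    w + sin \<tau> *s (lform p q b w *s a - lform p q a w *s b)
      - (1 - cos \<tau>) *s (lform p q a w *s a + lform p q b w *s b)"
  unfolding matexp_mult_vec_if_cube_eq_neg[OF ell_cube_mult_vec] ell_square_mult_vec
  by (simp add: ell_mult_vec vec_eq_iff algebra_simps)

end

lemma lform_add_frame_combination:
  fixes a b x y :: "real ^ 'n::finite"
  assumes aa: "lform p q a a = 1" and bb: "lform p q b b = 1" and ab: "lform p q a b = 0"
  shows "lform p q a (x + u *\<^sub>R a + v *\<^sub>R b) = lform p q a x + u"
    and "lform p q b (x + u *\<^sub>R a + v *\<^sub>R b) = lform p q b x + v"
    and "lform p q (x + u *\<^sub>R a + v *\<^sub>R b) (y + u' *\<^sub>R a + v' *\<^sub>R b) =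
      lform p q x y + u' * lform p q a x + v' * lform p q b x + u * lform p q a y + v * lform p q b y
      + u * u' + v * v'"
  using assms lform_commute[of p q b a] lform_commute[of p q x a] lform_commute[of p q x b]
    lform_commute[of p q a y] lform_commute[of p q b y]
  by (simp_all add: lform_real_linear algebra_simps)

lemma lform_cvec_plus_i: "lform p q (cvec a) (cvec x + \<i> *s cvec y) = Complex (lform p q a x) (lform p q a y)"
  by (simp add: lform_add_right lform_smult_right complex_eq_iff)

(* X + iY is the image of x + iy under exp(tau ell(a,b)), where cs, sn are cos, sin of Re tau
   and ch, sh are cosh, sinh of Im tau. *)
lemma frame_rotation_invariants:
  fixes a b x y :: "real ^ 'n::finite" and cs sn ch sh :: real
  assumes aa: "lform p q a a = 1" and bb: "lform p q b b = 1" and ab: "lform p q a b = 0"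
    and pythagoras: "cs\<^sup>2 + sn\<^sup>2 = 1" "ch\<^sup>2 - sh\<^sup>2 = 1"
  defines "A1 \<equiv> lform p q a x" and "A2 \<equiv> lform p q a y"
    and "B1 \<equiv> lform p q b x" and "B2 \<equiv> lform p q b y"
  defines "X \<equiv> x + ((cs * ch - 1) * A1 + sn * sh * A2 + sn * ch * B1 - cs * sh * B2) *\<^sub>R a
                  + ((cs * ch - 1) * B1 + sn * sh * B2 - sn * ch * A1 + cs * sh * A2) *\<^sub>R b"
    and "Y \<equiv> y + ((cs * ch - 1) * A2 - sn * sh * A1 + sn * ch * B2 + cs * sh * B1) *\<^sub>R a
                  + ((cs * ch - 1) * B2 - sn * sh * B1 - sn * ch * A2 - cs * sh * A1) *\<^sub>R b"
  shows "lform p q X X - lform p q Y Y = lform p q x x - lform p q y y"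
    and "lform p q X Y = lform p q x y"
    and "lform p q Y Y = lform p q y y + sh\<^sup>2 * (A1\<^sup>2 + A2\<^sup>2 + B1\<^sup>2 + B2\<^sup>2) - 2 * ch * sh * gram_det p q a b x y"
    and "gram_det p q a b X Y = gram_det p q a b x y * (ch\<^sup>2 + sh\<^sup>2) - (A1\<^sup>2 + A2\<^sup>2 + B1\<^sup>2 + B2\<^sup>2) * ch * sh"
  using pythagoras
  unfolding X_def Y_def gram_det_def lform_add_frame_combination[OF aa bb ab]
    A1_def[symmetric] A2_def[symmetric] B1_def[symmetric] B2_def[symmetric]
  by algebra+

lemma cos_sin_eq_Complex:
  "cos \<tau> = Complex (cos (Re \<tau>) * cosh (Im \<tau>)) (- sin (Re \<tau>) * sinh (Im \<tau>))"
  "sin \<tau> = Complex (sin (Re \<tau>) * cosh (Im \<tau>)) (cos (Re \<tau>) * sinh (Im \<tau>))"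
  by (simp_all add: complex_eq_iff Re_cos Im_cos Re_sin Im_sin cosh_field_def sinh_field_def field_simps)

lemma matexp_ell_real_imag:
  fixes a b x y :: "real ^ 'n::finite"
  assumes aa: "lform p q a a = 1" and bb: "lform p q b b = 1" and ab: "lform p q a b = 0"
  defines "N \<equiv> (lform p q a x)\<^sup>2 + (lform p q a y)\<^sup>2 + (lform p q b x)\<^sup>2 + (lform p q b y)\<^sup>2"
  obtains X Y where
    "matexp (map_matrix (\<lambda>m. \<tau> * m) (ell p q (cvec a) (cvec b))) *v (cvec x + \<i> *s cvec y)
      = cvec X + \<i> *s cvec Y"
    "lform p q X X - lform p q Y Y = lform p q x x - lform p q y y"
    "lform p q X Y = lform p q x y"
    "lform p q Y Y = lform p q y y + (sinh (Im \<tau>))\<^sup>2 * N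
      - 2 * cosh (Im \<tau>) * sinh (Im \<tau>) * gram_det p q a b x y"
    "gram_det p q a b X Y = gram_det p q a b x y * ((cosh (Im \<tau>))\<^sup>2 + (sinh (Im \<tau>))\<^sup>2)
      - N * cosh (Im \<tau>) * sinh (Im \<tau>)"
proof -
  have "(cos (Re \<tau>))\<^sup>2 + (sin (Re \<tau>))\<^sup>2 = 1" "(cosh (Im \<tau>))\<^sup>2 - (sinh (Im \<tau>))\<^sup>2 = 1"
    by (simp_all add: hyperbolic_pythagoras add.commute)
  note invariants = frame_rotation_invariants[OF aa bb ab this, where x = x and y = y, folded N_def]
  show thesis
    by (rule that[OF _ invariants])
      (unfold matexp_ell_mult_vec[of p q "cvec a" "cvec b", simplified, OF aa bb ab]
        lform_cvec_plus_i cos_sin_eq_Complex,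
       simp add: aa bb ab cvec_def vec_eq_iff complex_eq_iff algebra_simps)
qed

section \<open>The tube\<close>

definition tube :: "'n::finite \<Rightarrow> 'n \<Rightarrow> (complex ^ 'n) set" where
  "tube p q = {cvec x + \<i> *s cvec y | x y.
     lform p q x x - lform p q y y = 1 \<and> lform p q x y = 0 \<and> lform p q y y > 0 \<and>
     orientation p q x y < 0}"

(* On tube, gram_det p q a b x y < 0 is equivalent to orientation p q x y < 0 for every
   frame (a,b); only the gram_det form passes to the closure usefully, since there x and y
   may stop spanning a positive plane. *)
definition weak_tube :: "'n::finite \<Rightarrow> 'n \<Rightarrow> real ^ 'n \<Rightarrow> real ^ 'n \<Rightarrow> (complex ^ 'n) set" where
  "weak_tube p q a b = {cvec x + \<i> *s cvec y | x y.
     lform p q x x - lform p q y y = 1 \<and> lform p q x y = 0 \<and> lform p q y y \<ge> 0 \<and>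
     gram_det p q a b x y \<le> 0}"

lemma closed_weak_tube:
  fixes p q :: "'n::finite"
  shows "closed (weak_tube p q a b)"
proof -
  define re :: "complex ^ 'n \<Rightarrow> real ^ 'n" where "re z = (\<chi> i. Re (z$i))" for z
  define im :: "complex ^ 'n \<Rightarrow> real ^ 'n" where "im z = (\<chi> i. Im (z$i))" for z
  have parts: "z = cvec (re z) + \<i> *s cvec (im z)" "re (cvec x + \<i> *s cvec y) = x" "im (cvec x + \<i> *s cvec y) = y"
    for z x y
    by (simp_all add: re_def im_def cvec_def vec_eq_iff complex_eq_iff)
  have "weak_tube p q a b = {z. lform p q (re z) (re z) - lform p q (im z) (im z) = 1 \<and>
      lform p q (re z) (im z) = 0 \<and> lform p q (im z) (im z) \<ge> 0 \<and> gram_det p q a b (re z) (im z) \<le> 0}"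
    unfolding weak_tube_def by (metis (no_types, lifting) parts)
  moreover have "continuous_on UNIV re" "continuous_on UNIV im"
    unfolding re_def im_def by (intro continuous_on_vec_lambda continuous_intros)+
  ultimately show ?thesis
    unfolding gram_det_def lform_def
    by (simp only:) (intro closed_Collect_conj closed_Collect_eq closed_Collect_le continuous_intros)
qed

lemma tube_subset_weak_tube:
  assumes "oriented_frame p q a b"
  shows "tube p q \<subseteq> weak_tube p q a b"
proof
  fix z
  assume "z \<in> tube p q"
  then obtain x y where z: "z = cvec x + \<i> *s cvec y"
    and xy: "lform p q x x - lform p q y y = 1" "lform p q x y = 0" "lform p q y y > 0" "orientation p q x y < 0"
    by (auto simp: tube_def)
  have "positive_pair p q x y"
    using xy by (intro positive_pairI) simp_all
  then have "gram_det p q a b x y < 0"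
    using assms xy(4) by (simp add: gram_det_neg_iff_orientation_neg oriented_frame_positive_pair
        oriented_frame_def)
  then show "z \<in> weak_tube p q a b"
    unfolding weak_tube_def using z xy by fastforce
qed

lemma in_tube_if_gram_det_neg:
  assumes "oriented_frame p q a b" and "lform p q x x - lform p q y y = 1" "lform p q x y = 0"
    and "lform p q y y > 0" "gram_det p q a b x y < 0"
  shows "cvec x + \<i> *s cvec y \<in> tube p q"
proof -
  have "positive_pair p q x y"
    using assms(2-4) by (intro positive_pairI) simp_all
  with assms(1,5) have "orientation p q x y < 0"
    using gram_det_neg_iff_orientation_neg oriented_frame_positive_pair oriented_frame_def by metis
  with assms(2-4) show ?thesis
    unfolding tube_def by blast
qed

lemma matexp_ell_weak_tube_in_tube:
  fixes \<tau> :: complex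
  assumes frame: "oriented_frame p q a b" and "Im \<tau> > 0" and "z \<in> weak_tube p q a b"
  shows "matexp (map_matrix (\<lambda>m. \<tau> * m) (ell p q (cvec a) (cvec b))) *v z \<in> tube p q"
proof -
  obtain x y where z: "z = cvec x + \<i> *s cvec y"
    and xy: "lform p q x x - lform p q y y = 1" "lform p q x y = 0" "lform p q y y \<ge> 0"
      "gram_det p q a b x y \<le> 0"
    using assms(3) by (auto simp: weak_tube_def)
  define N where "N = (lform p q a x)\<^sup>2 + (lform p q a y)\<^sup>2 + (lform p q b x)\<^sup>2 + (lform p q b y)\<^sup>2"
  obtain X Y where XY: "matexp (map_matrix (\<lambda>m. \<tau> * m) (ell p q (cvec a) (cvec b))) *v z
      = cvec X + \<i> *s cvec Y"
    and Q: "lform p q X X - lform p q Y Y = lform p q x x - lform p q y y"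
    and B: "lform p q X Y = lform p q x y"
    and QY: "lform p q Y Y = lform p q y y + (sinh (Im \<tau>))\<^sup>2 * N
      - 2 * cosh (Im \<tau>) * sinh (Im \<tau>) * gram_det p q a b x y"
    and G: "gram_det p q a b X Y = gram_det p q a b x y * ((cosh (Im \<tau>))\<^sup>2 + (sinh (Im \<tau>))\<^sup>2)
      - N * cosh (Im \<tau>) * sinh (Im \<tau>)"
    using matexp_ell_real_imag[where p = p and q = q and a = a and b = b and x = x and y = y and \<tau> = \<tau>]
      frame unfolding z N_def oriented_frame_def by blast
  have "N > 0"
    using oriented_frame_lform_sum_squares_pos[OF frame, of x] xy(1,3) unfolding N_def
    by (smt (verit) zero_le_power2)
  have "sinh (Im \<tau>) > 0" "cosh (Im \<tau>) > 0"
    using \<open>Im \<tau> > 0\<close> by simp_all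
  have "2 * cosh (Im \<tau>) * sinh (Im \<tau>) * gram_det p q a b x y \<le> 0"
    using xy(4) \<open>cosh (Im \<tau>) > 0\<close> \<open>sinh (Im \<tau>) > 0\<close> by (simp add: mult_nonneg_nonpos)
  then have "lform p q Y Y \<ge> (sinh (Im \<tau>))\<^sup>2 * N"
    unfolding QY using xy(3) by linarith
  moreover have "(sinh (Im \<tau>))\<^sup>2 * N > 0"
    using \<open>N > 0\<close> \<open>sinh (Im \<tau>) > 0\<close> by simp
  ultimately have "lform p q Y Y > 0"
    by linarith
  have "gram_det p q a b x y * ((cosh (Im \<tau>))\<^sup>2 + (sinh (Im \<tau>))\<^sup>2) \<le> 0"
    using xy(4) by (simp add: mult_nonpos_nonneg)
  moreover have "N * cosh (Im \<tau>) * sinh (Im \<tau>) > 0"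
    using \<open>N > 0\<close> \<open>cosh (Im \<tau>) > 0\<close> \<open>sinh (Im \<tau>) > 0\<close> by simp
  ultimately have "gram_det p q a b X Y < 0"
    unfolding G by linarith
  moreover have "lform p q X X - lform p q Y Y = 1" "lform p q X Y = 0"
    using Q B xy by simp_all
  ultimately show ?thesis
    unfolding XY using in_tube_if_gram_det_neg[OF frame] \<open>lform p q Y Y > 0\<close> by blast
qed

lemma tube_subset_Z1plus: "tube p q \<subseteq> Z1plus p q"
proof
  fix z
  assume "z \<in> tube p q"
  then obtain x y where z: "z = cvec x + \<i> *s cvec y"
    and xy: "lform p q x x - lform p q y y = 1" "lform p q x y = 0" "lform p q y y > 0" "orientation p q x y < 0"
    by (auto simp: tube_def)
  define s where "s = sqrt (lform p q y y)"
  define c where "c = sqrt (s\<^sup>2 + 1)"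
  have "s > 0" "c > 0" "s\<^sup>2 = lform p q y y" "c\<^sup>2 = lform p q x x"
    using xy by (simp_all add: s_def c_def add_pos_nonneg)
  define a' where "a' = (1 / c) *\<^sub>R x"
  define b' where "b' = (- 1 / s) *\<^sub>R y"
  have "oriented_frame p q a' b'"
    using xy \<open>s > 0\<close> \<open>c > 0\<close> \<open>s\<^sup>2 = lform p q y y\<close> \<open>c\<^sup>2 = lform p q x x\<close>
    by (simp add: oriented_frame_def a'_def b'_def lform_real_linear orientation_def power2_eq_square
        field_simps mult_neg_pos)
  then have frame: "lform p q a' a' = 1" "lform p q b' b' = 1" "lform p q a' b' = 0"
    by (simp_all add: oriented_frame_def)
  define \<tau> where "\<tau> = \<i> * complex_of_real (arsinh s)"
  have "cos \<tau> = of_real c" "sin \<tau> = \<i> * of_real s"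
    by (simp_all add: \<tau>_def cos_sin_eq_Complex cosh_arsinh_real c_def complex_eq_iff)
  have "lform p q (cvec a') (cvec a') = 1" "lform p q (cvec b') (cvec a') = 0"
    using frame lform_commute[of p q b' a'] by simp_all
  then have "matexp (map_matrix (\<lambda>m. \<tau> * m) (ell p q (cvec a') (cvec b'))) *v cvec a'
      = of_real c *s cvec a' - (\<i> * of_real s) *s cvec b'"
    unfolding matexp_ell_mult_vec[of p q "cvec a'" "cvec b'", simplified, OF frame]
      \<open>cos \<tau> = of_real c\<close> \<open>sin \<tau> = \<i> * of_real s\<close>
    by (simp add: vec_eq_iff algebra_simps)
  also have "\<dots> = z"
    using \<open>s > 0\<close> \<open>c > 0\<close> by (simp add: z a'_def b'_def cvec_def vec_eq_iff complex_eq_iff)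
  finally have "matexp (map_matrix (\<lambda>m. \<tau> * m) (ell p q (cvec a') (cvec b'))) *v cvec a' = z" .
  moreover have "ell p q (cvec a') (cvec b') \<in> C1 p q"
    using \<open>oriented_frame p q a' b'\<close> by (auto simp: C1_eq)
  moreover have "a' \<in> Xd p q" "Im \<tau> > 0"
    using frame \<open>s > 0\<close> by (simp_all add: Xd_def \<tau>_def)
  ultimately show "z \<in> Z1plus p q"
    unfolding Z1plus_def by blast
qed

lemma Z1plus_eq_tube: "Z1plus p q = tube p q"
proof
  show "Z1plus p q \<subseteq> tube p q"
  proof
    fix z
    assume "z \<in> Z1plus p q"
    then obtain a b c \<tau> where "oriented_frame p q a b" "lform p q c c = 1" "Im \<tau> > 0"
      and z: "z = matexp (map_matrix (\<lambda>m. \<tau> * m) (ell p q (cvec a) (cvec b))) *v cvec c"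
      by (auto simp: Z1plus_def C1_eq Xd_def)
    moreover have "cvec c = cvec c + \<i> *s cvec 0"
      by (simp add: cvec_def vec_eq_iff)
    moreover have "cvec c + \<i> *s cvec 0 \<in> weak_tube p q a b"
      using \<open>lform p q c c = 1\<close> unfolding weak_tube_def gram_det_def by fastforce
    ultimately show "z \<in> tube p q"
      using matexp_ell_weak_tube_in_tube by metis
  qed
  show "tube p q \<subseteq> Z1plus p q"
    by (rule tube_subset_Z1plus)
qed

theorem lemma5:
  fixes p q :: "'n::finite" and a b :: "real ^ 'n" and M :: "complex ^ 'n ^ 'n" and \<tau> :: complex
  assumes "CARD('n) \<ge> 3" and "p \<noteq> q"
    and "cvec a + \<i> *s cvec b \<in> closure (Z1plus p q)"
    and "M \<in> C1 p q" and "Im \<tau> > 0"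
  shows "matexp (map_matrix (\<lambda>m. \<tau> * m) M) *v (cvec a + \<i> *s cvec b) \<in> Z1plus p q"
proof -
  obtain a0 b0 where M: "M = ell p q (cvec a0) (cvec b0)" and frame: "oriented_frame p q a0 b0"
    using assms(4) by (auto simp: C1_eq)
  have "closure (Z1plus p q) \<subseteq> weak_tube p q a0 b0"
    unfolding Z1plus_eq_tube
    by (rule closure_minimal[OF tube_subset_weak_tube[OF frame] closed_weak_tube])
  with assms(3) have "cvec a + \<i> *s cvec b \<in> weak_tube p q a0 b0"
    by blast
  then show ?thesis
    unfolding M Z1plus_eq_tube using matexp_ell_weak_tube_in_tube[OF frame assms(5)] by blast
qed

end
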